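(* Let $k$ be a positive integer and let $m>k$ be an integer. If $v$ and $w$ are vertices lying in distinct connected components of $\mathcal F_k^{(m)}$, then they lie in distinct connected components of $\mathcal F_k^{(m+1)}$.
   Context: The vertex set $V$ consists of all reduced fractions $p/q$ with $p,q\in\mathbb Z$, $\gcd(p,q)=1$, together with $1/0$; here $p/q$ and $(-p)/(-q)$ denote the same vertex. For vertices define $d(p/q,a/b)=|pb-qa|$. The graph $\mathcal F_k$ has vertex set $V$, with an edge between $p/q$ and $a/b$ exactly when $d(p/q,a/b)=k$. The level of a vertex $p/q$ is $\max\{|p|,|q|\}$. For $m\in\mathbb N$, $\mathcal F_k^{(m)}$ is the subgraph of $\mathcal F_k$ induced on the vertices of level at most $m$. *)

theory Defs
  imports Main
begin

text \<open>A vertex p/q is represented by its canonical integer pair (p,q):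
  gcd p q = 1 and either q > 0, or q = 0 and p = 1 (the vertex 1/0).
  Every reduced fraction (identified with its negative) has exactly one
  such representative.\<close>

definition vertex :: "int \<times> int \<Rightarrow> bool" where
  "vertex v \<longleftrightarrow> (case v of (p, q) \<Rightarrow>
      gcd p q = 1 \<and> (q > 0 \<or> (q = 0 \<and> p = 1)))"

definition fdist :: "int \<times> int \<Rightarrow> int \<times> int \<Rightarrow> int" where
  "fdist v w = (case v of (p, q) \<Rightarrow> case w of (a, b) \<Rightarrow> \<bar>p * b - q * a\<bar>)"

definition level :: "int \<times> int \<Rightarrow> int" where
  "level v = (case v of (p, q) \<Rightarrow> max \<bar>p\<bar> \<bar>q\<bar>)"

definition F_edge :: "int \<Rightarrow> int \<times> int \<Rightarrow> int \<times> int \<Rightarrow> bool" where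
  "F_edge k v w \<longleftrightarrow> vertex v \<and> vertex w \<and> fdist v w = k"

definition F_sub_edge :: "int \<Rightarrow> int \<Rightarrow> int \<times> int \<Rightarrow> int \<times> int \<Rightarrow> bool" where
  "F_sub_edge k m v w \<longleftrightarrow> F_edge k v w \<and> level v \<le> m \<and> level w \<le> m"

definition same_component :: "int \<Rightarrow> int \<Rightarrow> int \<times> int \<Rightarrow> int \<times> int \<Rightarrow> bool" where
  "same_component k m v w \<longleftrightarrow>
     vertex v \<and> vertex w \<and> level v \<le> m \<and> level w \<le> m \<and> (F_sub_edge k m)\<^sup>*\<^sup>* v w"

end

theory Submission
  imports Defs
begin

text \<open>Two distinct vertices of the same level N are at distance at least N: if their
  large coordinates sit in the same position the determinant is a multiple of N, and
  otherwise it is at least N * N - (N - 1) * (N - 1). So for k < m + 1 the vertices of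
  level m + 1 are pairwise non-adjacent in F_k. If u and y are neighbours of lower level
  of a vertex x = p/q with the same oriented distance, coprimality forces
  u - y = s (p, q), the level bound forces \<bar>s\<bar> \<le> 1, and then d(u, y) = \<bar>s\<bar> k; hence
  two such neighbours of x are equal (up to sign) or adjacent. A path in F_k^(m+1)
  between vertices of level at most m therefore leaves level at most m only for single
  vertices, each of which can be bypassed.\<close>

lemma abs_le_abs_det_if_abs_eq:
  fixes p q a b :: int
  assumes "\<bar>p\<bar> = \<bar>a\<bar>" and "p * b - q * a \<noteq> 0"
  shows "\<bar>p\<bar> \<le> \<bar>p * b - q * a\<bar>"
proof -
  have "a = p \<or> a = - p" using assms(1) by linarith
  then have "p dvd p * b - q * a" by auto
  then show ?thesis using assms(2) by (rule dvd_imp_le_int[rotated])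
qed

lemma abs_det_ge_if_cross_abs_eq:
  fixes p q a b N :: int
  assumes "\<bar>p\<bar> = N" and "\<bar>b\<bar> = N" and "\<bar>q\<bar> < N" and "\<bar>a\<bar> < N"
  shows "N \<le> \<bar>p * b - q * a\<bar>"
proof -
  have "\<bar>q * a\<bar> \<le> (N - 1) * (N - 1)"
    unfolding abs_mult using assms(3,4) by (intro mult_mono) auto
  moreover have "\<bar>p * b\<bar> = N * N" using assms(1,2) by (simp add: abs_mult)
  moreover have "\<bar>p * b\<bar> \<le> \<bar>p * b - q * a\<bar> + \<bar>q * a\<bar>" by linarith
  ultimately show ?thesis using assms(3) by (simp add: algebra_simps)
qed

lemma abs_det_ge_if_same_level:
  fixes p q a b N :: int
  assumes "max \<bar>p\<bar> \<bar>q\<bar> = N" and "max \<bar>a\<bar> \<bar>b\<bar> = N" and "p * b - q * a \<noteq> 0"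
  shows "N \<le> \<bar>p * b - q * a\<bar>"
proof -
  have swap: "\<bar>q * a - p * b\<bar> = \<bar>p * b - q * a\<bar>" by (rule abs_minus_commute)
  consider "\<bar>p\<bar> = N" "\<bar>a\<bar> = N" | "\<bar>q\<bar> = N" "\<bar>b\<bar> = N"
    | "\<bar>p\<bar> = N" "\<bar>b\<bar> = N" "\<bar>q\<bar> < N" "\<bar>a\<bar> < N"
    | "\<bar>q\<bar> = N" "\<bar>a\<bar> = N" "\<bar>p\<bar> < N" "\<bar>b\<bar> < N"
    using assms(1,2) by linarith
  then show ?thesis
  proof cases
    case 1
    then show ?thesis using abs_le_abs_det_if_abs_eq[of p a b q] assms(3) by simp
  next
    case 2
    then show ?thesis using abs_le_abs_det_if_abs_eq[of q b a p] assms(3) swap by simp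
  next
    case 3
    then show ?thesis by (rule abs_det_ge_if_cross_abs_eq)
  next
    case 4
    then show ?thesis using abs_det_ge_if_cross_abs_eq[of q N a p b] swap by simp
  qed
qed

lemma coprime_cross_eq_imp_common_multiple:
  fixes p q x y :: int
  assumes "coprime p q" and "p * y = q * x"
  obtains s where "x = p * s" and "y = q * s"
proof (cases "p = 0")
  case True
  then have "\<bar>q\<bar> = 1" using assms(1) by simp
  then have "q * q = 1" by (metis abs_mult_self_eq mult_1)
  moreover have "x = 0" using True assms(2) \<open>\<bar>q\<bar> = 1\<close> by auto
  ultimately show ?thesis using True that[of "q * y"] by (simp add: mult.assoc[symmetric])
next
  case False
  have "p dvd q * x" using assms(2) by (metis dvd_triv_left)
  then have "p dvd x" using assms(1) by (simp add: coprime_dvd_mult_right_iff)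
  then obtain s where s: "x = p * s" by (rule dvdE)
  then have "p * y = p * (q * s)" using assms(2) by (simp add: algebra_simps)
  then show ?thesis using False s that by simp
qed

lemma det_common_neighbour:
  fixes p q a b c d :: int
  assumes "coprime p q"
    and "\<bar>a\<bar> < max \<bar>p\<bar> \<bar>q\<bar>" "\<bar>b\<bar> < max \<bar>p\<bar> \<bar>q\<bar>"
    and "\<bar>c\<bar> < max \<bar>p\<bar> \<bar>q\<bar>" "\<bar>d\<bar> < max \<bar>p\<bar> \<bar>q\<bar>"
    and same_det: "p * b - q * a = p * d - q * c"
  shows "(a, b) = (c, d) \<or> \<bar>a * d - b * c\<bar> = \<bar>p * b - q * a\<bar>"
proof -
  have "p * (b - d) = q * (a - c)" using same_det by (simp add: algebra_simps)
  with assms(1) obtain s where s: "a - c = p * s" "b - d = q * s"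
    by (rule coprime_cross_eq_imp_common_multiple)
  have "s = 0 \<or> \<bar>s\<bar> = 1"
  proof (rule ccontr)
    assume "\<not> (s = 0 \<or> \<bar>s\<bar> = 1)"
    then have "2 \<le> \<bar>s\<bar>" by linarith
    then have "2 * \<bar>p\<bar> \<le> \<bar>a - c\<bar>" "2 * \<bar>q\<bar> \<le> \<bar>b - d\<bar>"
      using s by (simp_all add: abs_mult mult.commute mult_left_mono)
    then show False using assms(2-5) by linarith
  qed
  moreover have "a * d - b * c = s * (p * d - q * c)"
    using s by (simp add: algebra_simps)
  ultimately show ?thesis using s same_det by (auto simp: abs_mult)
qed

lemma abs_det_common_neighbour:
  fixes p q a b c d :: int
  assumes "coprime p q"
    and "\<bar>a\<bar> < max \<bar>p\<bar> \<bar>q\<bar>" "\<bar>b\<bar> < max \<bar>p\<bar> \<bar>q\<bar>"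
    and "\<bar>c\<bar> < max \<bar>p\<bar> \<bar>q\<bar>" "\<bar>d\<bar> < max \<bar>p\<bar> \<bar>q\<bar>"
    and "\<bar>p * b - q * a\<bar> = \<bar>p * d - q * c\<bar>"
  shows "(a, b) = (c, d) \<or> (a, b) = (- c, - d) \<or> \<bar>a * d - b * c\<bar> = \<bar>p * b - q * a\<bar>"
proof -
  have "p * b - q * a = p * d - q * c \<or> p * b - q * a = p * (- d) - q * (- c)"
    using assms(6) by (simp add: abs_eq_iff algebra_simps)
  then show ?thesis
  proof
    assume "p * b - q * a = p * d - q * c"
    then show ?thesis using det_common_neighbour[OF assms(1-5)] by blast
  next
    assume "p * b - q * a = p * (- d) - q * (- c)"
    moreover have "\<bar>- c\<bar> < max \<bar>p\<bar> \<bar>q\<bar>" "\<bar>- d\<bar> < max \<bar>p\<bar> \<bar>q\<bar>"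
      using assms(4,5) by simp_all
    ultimately have "(a, b) = (- c, - d) \<or> \<bar>a * - d - b * - c\<bar> = \<bar>p * b - q * a\<bar>"
      using det_common_neighbour[OF assms(1-3)] by blast
    moreover have "\<bar>a * - d - b * - c\<bar> = \<bar>a * d - b * c\<bar>" by (simp add: abs_minus_commute)
    ultimately show ?thesis by argo
  qed
qed

lemma rtranclp_restrict_bypass:
  fixes E :: "'a \<Rightarrow> 'a \<Rightarrow> bool" and P :: "'a \<Rightarrow> bool"
  assumes "E\<^sup>*\<^sup>* v w" and "P v" and "P w"
    and independent: "\<And>x y. E x y \<Longrightarrow> \<not> P x \<Longrightarrow> \<not> P y \<Longrightarrow> False"
    and bypass: "\<And>u x y. E u x \<Longrightarrow> E x y \<Longrightarrow> P u \<Longrightarrow> \<not> P x \<Longrightarrow> P y \<Longrightarrow> u = y \<or> E u y"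
  shows "(\<lambda>x y. E x y \<and> P x \<and> P y)\<^sup>*\<^sup>* v w"
proof -
  let ?R = "\<lambda>x y. E x y \<and> P x \<and> P y"
  have "if P w then ?R\<^sup>*\<^sup>* v w else \<exists>u. ?R\<^sup>*\<^sup>* v u \<and> P u \<and> E u w"
    using \<open>E\<^sup>*\<^sup>* v w\<close>
  proof (induction rule: rtranclp_induct)
    case base
    then show ?case using \<open>P v\<close> by simp
  next
    case (step x y)
    show ?case
    proof (cases "P x")
      case True
      then have "?R\<^sup>*\<^sup>* v x" using step.IH by simp
      then show ?thesis using True step.hyps(2) by (auto intro: rtranclp.rtrancl_into_rtrancl)
    next
      case False
      then obtain u where u: "?R\<^sup>*\<^sup>* v u" "P u" "E u x" using step.IH by auto
      show ?thesis
      proof (cases "P y")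
        case True
        then have "u = y \<or> ?R u y" using bypass[OF \<open>E u x\<close> step.hyps(2)] u False by blast
        then show ?thesis using u True by (auto intro: rtranclp.rtrancl_into_rtrancl)
      next
        case False
        then show ?thesis using independent step.hyps(2) \<open>\<not> P x\<close> by blast
      qed
    qed
  qed
  then show ?thesis using \<open>P w\<close> by simp
qed

lemma vertex_coprime: "vertex (p, q) \<Longrightarrow> coprime p q"
  by (simp add: vertex_def coprime_iff_gcd_eq_1)

lemma vertex_neg_not_vertex: "vertex (a, b) \<Longrightarrow> \<not> vertex (- a, - b)"
  by (auto simp: vertex_def)

lemma fdist_commute: "fdist v w = fdist w v"
  by (auto simp: fdist_def abs_minus_commute mult.commute split: prod.splits)

lemma F_edge_sym: "F_edge k v w \<Longrightarrow> F_edge k w v"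
  by (simp add: F_edge_def fdist_commute)

lemma not_F_edge_same_level:
  assumes "0 < k" and "k < level v" and "level w = level v"
  shows "\<not> F_edge k v w"
proof
  assume "F_edge k v w"
  obtain p q a b where v: "v = (p, q)" and w: "w = (a, b)" by fastforce
  then have det: "\<bar>p * b - q * a\<bar> = k" using \<open>F_edge k v w\<close> by (simp add: F_edge_def fdist_def)
  then have "p * b - q * a \<noteq> 0" using assms(1) by auto
  then have "level v \<le> \<bar>p * b - q * a\<bar>"
    using abs_det_ge_if_same_level[of p q "level v" a b] assms(3) v w by (simp add: level_def)
  then show False using det assms(2) by simp
qed

lemma F_edge_common_neighbour:
  assumes "F_edge k u x" and "F_edge k x y" and "level u < level x" and "level y < level x"
  shows "u = y \<or> F_edge k u y"
proof -
  obtain p q a b c d where x: "x = (p, q)" and u: "u = (a, b)" and y: "y = (c, d)"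
    by (metis surj_pair)
  have "vertex x" "vertex u" "vertex y" using assms(1,2) by (simp_all add: F_edge_def)
  have "fdist x u = k" "fdist x y = k"
    using assms(1,2) by (simp_all add: F_edge_def fdist_commute)
  then have "(a, b) = (c, d) \<or> (a, b) = (- c, - d) \<or> \<bar>a * d - b * c\<bar> = k"
    using abs_det_common_neighbour[of p q a b c d] assms(3,4) vertex_coprime \<open>vertex x\<close>
    by (simp add: x u y fdist_def level_def)
  then show ?thesis
    using \<open>vertex u\<close> \<open>vertex y\<close> vertex_neg_not_vertex[of c d]
    by (auto simp: u y F_edge_def fdist_def)
qed

theorem proposition4p8:
  fixes k m :: int and v w :: "int \<times> int"
  assumes "k > 0" and "m > k"
    and "vertex v" and "vertex w" and "level v \<le> m" and "level w \<le> m"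
    and "\<not> same_component k m v w"
  shows "\<not> same_component k (m + 1) v w"
proof
  assume "same_component k (m + 1) v w"
  then have "(F_sub_edge k (m + 1))\<^sup>*\<^sup>* v w" by (simp add: same_component_def)
  from this assms(5,6) have "(\<lambda>x y. F_sub_edge k (m + 1) x y \<and> level x \<le> m \<and> level y \<le> m)\<^sup>*\<^sup>* v w"
  proof (rule rtranclp_restrict_bypass)
    fix x y
    assume "F_sub_edge k (m + 1) x y" "\<not> level x \<le> m" "\<not> level y \<le> m"
    then show False using not_F_edge_same_level[of k x y] assms(1,2)
      by (simp add: F_sub_edge_def)
  next
    fix u x y
    assume "F_sub_edge k (m + 1) u x" "F_sub_edge k (m + 1) x y"
      and "level u \<le> m" "\<not> level x \<le> m" "level y \<le> m"
    then show "u = y \<or> F_sub_edge k (m + 1) u y"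
      using F_edge_common_neighbour[of k u x y] by (simp add: F_sub_edge_def)
  qed
  moreover have "(\<lambda>x y. F_sub_edge k (m + 1) x y \<and> level x \<le> m \<and> level y \<le> m) = F_sub_edge k m"
    by (auto simp: fun_eq_iff F_sub_edge_def)
  ultimately have "(F_sub_edge k m)\<^sup>*\<^sup>* v w" by simp
  then show False using assms(3-7) by (simp add: same_component_def)
qed

end
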